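(* Let $1\leq r\leq n$, give the variables $x_1,\dots,x_n$ of $\mathbb{C}^n$ the weights $(w_1,\dots,w_r,0,\dots,0)$ with $w_1,\dots,w_r>0$, and let $f\in \mathbb{C}\{x_{r+1},\dots,x_n\}[x_1,\dots,x_r]$ be a quasihomogeneous polynomial of strictly positive weight $\mathrm{wt}(f)>0$. Then for every integer $p>0$ and every non-zero quasihomogeneous logarithmic $p$-form $\omega$ (logarithmic with respect to $f$), one has $\mathrm{wt}(\omega)>-\mathrm{wt}(f)$.
   Context: Weights: an element $g\in \mathbb{C}\{x_{r+1},\dots,x_n\}[x_1,\dots,x_r]$ is quasihomogeneous of weight $d$ if it is a sum of terms $c(x_{r+1},\dots,x_n)\,x_1^{a_1}\cdots x_r^{a_r}$ with $\sum_{i=1}^r a_iw_i=d$; the variables $x_{r+1},\dots,x_n$ have weight $0$. We set $\mathrm{wt}(dx_i)=w_i$ for $i\le r$ and $\mathrm{wt}(dx_i)=0$ for $i>r$; a holomorphic $p$-form $\sum_I g_I\,dx_{i_1}\wedge\cdots\wedge dx_{i_p}$ is quasihomogeneous of weight $d$ if each $g_I$ is quasihomogeneous and $\mathrm{wt}(g_I)+\sum_{k}\mathrm{wt}(dx_{i_k})=d$ for all nonzero terms. A germ at $0$ of meromorphic $p$-form $\omega$ is logarithmic (with respect to $f$) if $f\omega$ and $f\,d\omega$ are holomorphic; it is quasihomogeneous if the holomorphic form $f\omega$ is quasihomogeneous, and then $\mathrm{wt}(\omega):=\mathrm{wt}(f\omega)-\mathrm{wt}(f)$. *)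

theory Defs
  imports "HOL-Analysis.Analysis"
begin

text \<open>A weight function w :: 'n => real assigns w i > 0 to the weighted variables
  x_1..x_r and w i = 0 to x_{r+1}..x_n.  Germs at 0 are represented by
  functions, equalities of germs hold eventually in nhds 0.\<close>

definition holo_on :: "(complex^'n) set \<Rightarrow> (complex^'n \<Rightarrow> complex) \<Rightarrow> bool" where
  "holo_on U g \<longleftrightarrow> (\<forall>z\<in>U. \<exists>L. (g has_derivative L) (at z) \<and> (\<forall>c v. L (c *s v) = c * L v))"

definition holo_germ :: "(complex^'n \<Rightarrow> complex) \<Rightarrow> bool" where
  "holo_germ g \<longleftrightarrow> (\<exists>U. open U \<and> 0 \<in> U \<and> holo_on U g)"

text \<open>Elements of C{x_{r+1},...,x_n}: holomorphic germs depending only on the weight-0 variables.\<close>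
definition wt0_fun :: "('n \<Rightarrow> real) \<Rightarrow> (complex^'n \<Rightarrow> complex) \<Rightarrow> bool" where
  "wt0_fun w c \<longleftrightarrow> holo_germ c \<and> (\<forall>x y. (\<forall>i. w i = 0 \<longrightarrow> x$i = y$i) \<longrightarrow> c x = c y)"

definition qh :: "('n::finite \<Rightarrow> real) \<Rightarrow> real \<Rightarrow> (complex^'n \<Rightarrow> complex) \<Rightarrow> bool" where
  "qh w d g \<longleftrightarrow> (\<exists>A c. finite A \<and>
     (\<forall>a\<in>A. (\<forall>i. w i = 0 \<longrightarrow> a i = (0::nat)) \<and> (\<Sum>i\<in>UNIV. real (a i) * w i) = d \<and> wt0_fun w (c a)) \<and>
     (\<forall>\<^sub>F x in nhds 0. g x = (\<Sum>a\<in>A. c a x * (\<Prod>i\<in>UNIV. (x$i) ^ (a i)))))"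

text \<open>p-forms are given by alternating coefficient functions on index lists of length p:
  omega = (1/p!) sum_{i_1..i_p} omega_{i_1..i_p} dx_{i_1} ^ ... ^ dx_{i_p}.\<close>
definition alternating :: "nat \<Rightarrow> ('n list \<Rightarrow> complex^'n \<Rightarrow> complex) \<Rightarrow> bool" where
  "alternating p \<eta> \<longleftrightarrow> (\<forall>js i j. length js = p \<and> i < j \<and> j < p \<longrightarrow>
      \<eta> (js[i := js!j, j := js!i]) = (\<lambda>x. - \<eta> js x))"

definition holo_form :: "nat \<Rightarrow> ('n list \<Rightarrow> complex^'n \<Rightarrow> complex) \<Rightarrow> bool" where
  "holo_form p \<eta> \<longleftrightarrow> alternating p \<eta> \<and> (\<forall>js. length js = p \<longrightarrow> holo_germ (\<eta> js))"

definition qh_form :: "('n::finite \<Rightarrow> real) \<Rightarrow> nat \<Rightarrow> real \<Rightarrow> ('n list \<Rightarrow> complex^'n \<Rightarrow> complex) \<Rightarrow> bool" where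
  "qh_form w p d \<eta> \<longleftrightarrow> (\<forall>js. length js = p \<longrightarrow> qh w (d - sum_list (map w js)) (\<eta> js))"

definition pd :: "'n::finite \<Rightarrow> (complex^'n \<Rightarrow> complex) \<Rightarrow> complex^'n \<Rightarrow> complex" where
  "pd i g x = deriv (\<lambda>t. g (x + t *s axis i 1)) 0"

definition ext_d :: "('n::finite list \<Rightarrow> complex^'n \<Rightarrow> complex) \<Rightarrow> 'n list \<Rightarrow> complex^'n \<Rightarrow> complex" where
  "ext_d \<omega> js x = (\<Sum>k<length js. (-1)^k * pd (js!k) (\<omega> (take k js @ drop (Suc k) js)) x)"

definition f_times_eq :: "(complex^'n \<Rightarrow> complex) \<Rightarrow> nat \<Rightarrow> ('n list \<Rightarrow> complex^'n \<Rightarrow> complex)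
    \<Rightarrow> ('n list \<Rightarrow> complex^'n \<Rightarrow> complex) \<Rightarrow> bool" where
  "f_times_eq f p \<omega> \<eta> \<longleftrightarrow> (\<forall>\<^sub>F x in nhds 0. f x \<noteq> 0 \<longrightarrow> (\<forall>js. length js = p \<longrightarrow> f x * \<omega> js x = \<eta> js x))"

definition log_form :: "(complex^'n::finite \<Rightarrow> complex) \<Rightarrow> nat \<Rightarrow> ('n list \<Rightarrow> complex^'n \<Rightarrow> complex) \<Rightarrow> bool" where
  "log_form f p \<omega> \<longleftrightarrow> (\<exists>\<eta>. holo_form p \<eta> \<and> f_times_eq f p \<omega> \<eta>) \<and>
     (\<exists>\<theta>. holo_form (Suc p) \<theta> \<and> f_times_eq f (Suc p) (ext_d \<omega>) \<theta>)"

text \<open>Quasihomogeneous meromorphic form of weight e, where wt(omega) = wt(f omega) - wt(f) and wt f = df.\<close>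
definition qh_mero :: "('n::finite \<Rightarrow> real) \<Rightarrow> (complex^'n \<Rightarrow> complex) \<Rightarrow> real \<Rightarrow> nat \<Rightarrow> real
    \<Rightarrow> ('n list \<Rightarrow> complex^'n \<Rightarrow> complex) \<Rightarrow> bool" where
  "qh_mero w f df p e \<omega> \<longleftrightarrow> (\<exists>\<eta>. holo_form p \<eta> \<and> f_times_eq f p \<omega> \<eta> \<and> qh_form w p (e + df) \<eta>)"

definition nonzero_mero :: "(complex^'n \<Rightarrow> complex) \<Rightarrow> nat \<Rightarrow> ('n list \<Rightarrow> complex^'n \<Rightarrow> complex) \<Rightarrow> bool" where
  "nonzero_mero f p \<omega> \<longleftrightarrow> \<not> (\<forall>js. length js = p \<longrightarrow> (\<forall>\<^sub>F x in nhds 0. f x \<noteq> 0 \<longrightarrow> \<omega> js x = 0))"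

end

(* If wt(omega) <= -wt(f), then f omega is quasihomogeneous of weight <= 0. All weights being
   nonnegative, its components of negative weight vanish, so a nonzero component f omega_J = C has
   weight 0: C depends only on the weight-zero variables, dx_J contains no weighted differential, and
   every component of omega containing a weighted dx_i vanishes. For a weighted variable x_i the
   coefficient of dx_i ^ dx_J in f d omega is therefore f d_i(C/f) = -C d_i f / f.
   As wt(f) > 0, f vanishes when all weighted coordinates are zero; zeroing them one at a time gives
   a line in some weighted direction x_i on which f restricts to a nonzero polynomial P(t) with
   P(0) = 0. Then t P'(t)/P(t) tends to the order of that root as t -> 0, so C P'/P is unbounded
   and f d omega cannot be holomorphic. *)

theory Submission
  imports Defs "HOL-Computational_Algebra.Polynomial"
begin

lemma no_continuous_log_deriv_at_root:
  fixes P :: "complex poly"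
  assumes "P \<noteq> 0" "poly P 0 = 0" "c \<noteq> 0" "isCont h 0"
  shows "\<not> (\<forall>\<^sub>F t in at 0. poly P t \<noteq> 0 \<longrightarrow> h t * poly P t = c * poly (pderiv P) t)"
proof
  assume log_deriv: "\<forall>\<^sub>F t in at 0. poly P t \<noteq> 0 \<longrightarrow> h t * poly P t = c * poly (pderiv P) t"
  define k where "k = order 0 P"
  obtain Q where P: "P = [:0, 1:] ^ k * Q" and "\<not> [:0, 1:] dvd Q"
    using order_decomp[OF \<open>P \<noteq> 0\<close>, of 0] unfolding k_def by auto
  then have "poly Q 0 \<noteq> 0"
    by (simp add: poly_eq_0_iff_dvd)
  have "k \<noteq> 0"
    using \<open>P \<noteq> 0\<close> \<open>poly P 0 = 0\<close> order_root[of P 0] by (simp add: k_def)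
  then obtain m where k: "k = Suc m"
    using not0_implies_Suc by blast
  have "\<forall>\<^sub>F t in at 0. poly Q t \<noteq> 0"
    using \<open>poly Q 0 \<noteq> 0\<close> by (intro tendsto_imp_eventually_ne) (auto intro: tendsto_eq_intros)
  moreover have "\<forall>\<^sub>F t in at (0::complex). t \<noteq> 0"
    by (simp add: eventually_at_filter)
  ultimately have cancelled: "\<forall>\<^sub>F t in at 0. h t * t * poly Q t = c * (of_nat k * poly Q t + t * poly (pderiv Q) t)"
    using log_deriv
  proof eventually_elim
    case (elim t)
    have "poly (pderiv P) t = of_nat k * t ^ m * poly Q t + t ^ k * poly (pderiv Q) t"
      by (simp add: P k pderiv_mult pderiv_power pderiv_pCons algebra_simps del: power_Suc)
    with elim have "t ^ m * (h t * t * poly Q t) = t ^ m * (c * (of_nat k * poly Q t + t * poly (pderiv Q) t))"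
      by (simp add: P k algebra_simps)
    then show ?case
      using \<open>t \<noteq> 0\<close> by simp
  qed
  have "((\<lambda>t. h t * t * poly Q t) \<longlongrightarrow> 0) (at 0)"
    using \<open>isCont h 0\<close> unfolding isCont_def by (auto intro!: tendsto_eq_intros)
  then have "((\<lambda>t. c * (of_nat k * poly Q t + t * poly (pderiv Q) t)) \<longlongrightarrow> 0) (at 0)"
    using tendsto_cong[OF cancelled] by simp
  moreover have "((\<lambda>t. c * (of_nat k * poly Q t + t * poly (pderiv Q) t)) \<longlongrightarrow> c * of_nat k * poly Q 0) (at 0)"
    by (auto intro!: tendsto_eq_intros)
  ultimately have "c * of_nat k * poly Q 0 = 0"
    by (metis tendsto_unique trivial_limit_at)
  then show False
    using \<open>c \<noteq> 0\<close> \<open>poly Q 0 \<noteq> 0\<close> \<open>k \<noteq> 0\<close> by simp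
qed

lemma finite_subset_chain_step:
  assumes "finite W" "Q {}" "\<not> Q W"
  shows "\<exists>S i. S \<subseteq> W \<and> i \<in> W - S \<and> Q S \<and> \<not> Q (insert i S)"
  using assms
proof (induction W rule: finite_induct)
  case (insert a W)
  show ?case
  proof (cases "Q W")
    case True
    then show ?thesis
      using insert.hyps(2) insert.prems(2) by blast
  next
    case False
    then obtain S i where "S \<subseteq> W" "i \<in> W - S" "Q S" "\<not> Q (insert i S)"
      using insert.IH insert.prems(1) by blast
    then show ?thesis
      by blast
  qed
qed simp

lemma tendsto_axis_line [tendsto_intros]:
  fixes u :: "complex^'n::finite"
  assumes "(g \<longlongrightarrow> t) F"
  shows "((\<lambda>x. u + g x *s axis i 1) \<longlongrightarrow> u + t *s axis i 1) F"
  unfolding vector_scalar_mult_def by (intro tendsto_intros assms)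

lemma eventually_axis_line_in_open:
  fixes u :: "complex^'n::finite"
  assumes "open B" "u \<in> B"
  shows "\<forall>\<^sub>F t in nhds 0. u + t *s axis i 1 \<in> B"
proof -
  have "filterlim (\<lambda>t. u + t *s axis i 1) (nhds u) (nhds 0)"
    using tendsto_axis_line[OF filterlim_ident, where u = u and t = 0 and i = i] by simp
  then show ?thesis
    by (rule eventually_compose_filterlim[OF eventually_nhds_in_open[OF assms]])
qed

lemma isCont_on_axis_line:
  fixes u :: "complex^'n::finite"
  assumes "continuous_on B g" "open B" "u \<in> B"
  shows "isCont (\<lambda>t. g (u + t *s axis i 1)) 0"
proof (rule isCont_o2[where f = "\<lambda>t. u + t *s axis i 1"])
  show "isCont (\<lambda>t. u + t *s axis i 1) 0"
    unfolding isCont_def by (intro tendsto_intros)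
  show "isCont g (u + 0 *s axis i 1)"
    using continuous_on_eq_continuous_at[OF assms(2), of g] assms(1,3) by simp
qed

lemma pd_along_line:
  assumes "\<forall>\<^sub>F s in nhds t. g (u + s *s axis i 1) = h s" "(h has_field_derivative D) (at t)"
  shows "pd i g (u + t *s axis i 1) = D"
proof -
  have "eventually (\<lambda>s. g (u + s *s axis i 1) = h s) (filtermap (\<lambda>\<tau>. \<tau> + t) (nhds 0))"
    using assms(1) filtermap_nhds_shift[of "-t" 0] by simp
  then have shifted: "\<forall>\<^sub>F \<tau> in nhds 0. g (u + (\<tau> + t) *s axis i 1) = h (\<tau> + t)"
    by (simp only: eventually_filtermap)
  have shift: "u + t *s axis i 1 + \<tau> *s axis i 1 = u + (\<tau> + t) *s axis i 1" for \<tau>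
    by (simp add: add.assoc add.commute)
  have on_line: "\<forall>\<^sub>F \<tau> in nhds 0. g (u + t *s axis i 1 + \<tau> *s axis i 1) = h (\<tau> + t)"
    unfolding shift by (fact shifted)
  have "((\<lambda>\<tau>. h (\<tau> + t)) has_field_derivative D) (at 0)"
    using assms(2) DERIV_shift[of h D 0 t] by simp
  then have "((\<lambda>\<tau>. g (u + t *s axis i 1 + \<tau> *s axis i 1)) has_field_derivative D) (at 0)"
    using DERIV_cong_ev[OF refl on_line refl] by blast
  then show ?thesis
    unfolding pd_def by (rule DERIV_imp_deriv)
qed

lemma pd_eventually_zero:
  assumes "\<forall>\<^sub>F y in nhds x. g y = 0"
  shows "pd i g x = 0"
proof -
  have "filterlim (\<lambda>s. x + s *s axis i 1) (nhds x) (nhds 0)"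
    using tendsto_axis_line[OF filterlim_ident, where u = x and t = 0 and i = i] by simp
  with assms have "\<forall>\<^sub>F s in nhds 0. g (x + s *s axis i 1) = 0"
    by (rule eventually_compose_filterlim)
  then show ?thesis
    using pd_along_line[where t = 0 and u = x and h = "\<lambda>_. 0" and D = 0] by simp
qed

lemma ext_d_Cons:
  "ext_d \<omega> (i # js) x = pd i (\<omega> js) x -
     (\<Sum>m<length js. (-1) ^ m * pd (js ! m) (\<omega> (i # (take m js @ drop (Suc m) js))) x)"
  unfolding ext_d_def by (simp add: sum.lessThan_Suc_shift sum_negf del: sum.lessThan_Suc)

definition depends_on_wt0 :: "('n \<Rightarrow> real) \<Rightarrow> (complex^'n \<Rightarrow> complex) \<Rightarrow> bool" where
  "depends_on_wt0 w C \<longleftrightarrow> (\<forall>x y. (\<forall>j. w j = 0 \<longrightarrow> x $ j = y $ j) \<longrightarrow> C x = C y)"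

lemma depends_on_wt0_axis:
  assumes "depends_on_wt0 w C" "w i \<noteq> 0"
  shows "C (x + t *s axis i 1) = C x"
proof -
  have "\<forall>j. w j = 0 \<longrightarrow> (x + t *s axis i 1) $ j = x $ j"
    using assms(2) by (auto simp: axis_def)
  then show ?thesis
    using assms(1) unfolding depends_on_wt0_def by blast
qed

definition monomial_sum ::
    "('n \<Rightarrow> nat) set \<Rightarrow> (('n \<Rightarrow> nat) \<Rightarrow> complex^'n \<Rightarrow> complex) \<Rightarrow> complex^'n::finite \<Rightarrow> complex" where
  "monomial_sum A c x = (\<Sum>a\<in>A. c a x * (\<Prod>i\<in>UNIV. x $ i ^ a i))"

lemma qhE:
  assumes "qh w d g"
  obtains A c where "finite A"
    "\<And>a i. a \<in> A \<Longrightarrow> w i = 0 \<Longrightarrow> a i = 0"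
    "\<And>a. a \<in> A \<Longrightarrow> (\<Sum>i\<in>UNIV. real (a i) * w i) = d"
    "\<And>a. a \<in> A \<Longrightarrow> holo_germ (c a) \<and> depends_on_wt0 w (c a)"
    "\<forall>\<^sub>F x in nhds 0. g x = monomial_sum A c x"
proof -
  obtain A c where "finite A"
    and A: "\<forall>a\<in>A. (\<forall>i. w i = 0 \<longrightarrow> a i = 0) \<and> (\<Sum>i\<in>UNIV. real (a i) * w i) = d \<and> wt0_fun w (c a)"
    and "\<forall>\<^sub>F x in nhds 0. g x = (\<Sum>a\<in>A. c a x * (\<Prod>i\<in>UNIV. x $ i ^ a i))"
    using assms unfolding qh_def by blast
  then show thesis
    by (intro that[of A c]) (auto simp: monomial_sum_def wt0_fun_def depends_on_wt0_def)
qed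

lemma monomial_sum_eq_0:
  assumes "\<And>a. a \<in> A \<Longrightarrow> \<exists>j. a j \<noteq> 0 \<and> x $ j = 0"
  shows "monomial_sum A c x = 0"
  unfolding monomial_sum_def
proof (rule sum.neutral, rule ballI)
  fix a assume "a \<in> A"
  then obtain j where "a j \<noteq> 0" "x $ j = 0"
    using assms by blast
  then show "c a x * (\<Prod>i\<in>UNIV. x $ i ^ a i) = 0"
    by (auto simp: prod_zero_iff)
qed

lemma monomial_sum_on_axis_line:
  assumes "\<And>a x t. a \<in> A \<Longrightarrow> c a (x + t *s axis i 1) = c a x"
  shows "\<exists>P. \<forall>t. monomial_sum A c (u + t *s axis i 1) = poly P t"
proof
  let ?P = "\<Sum>a\<in>A. smult (c a u * (\<Prod>j\<in>UNIV - {i}. u $ j ^ a j)) ([:u $ i, 1:] ^ a i)"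
  show "\<forall>t. monomial_sum A c (u + t *s axis i 1) = poly ?P t"
  proof
    fix t
    have "(\<Prod>j\<in>UNIV. (u + t *s axis i 1) $ j ^ a j) = (u $ i + t) ^ a i * (\<Prod>j\<in>UNIV - {i}. u $ j ^ a j)"
      for a :: "'a \<Rightarrow> nat"
      by (subst prod.remove[of _ i]) (auto simp: axis_def intro!: prod.cong)
    then show "monomial_sum A c (u + t *s axis i 1) = poly ?P t"
      unfolding monomial_sum_def poly_sum using assms by (auto simp: ac_simps intro!: sum.cong)
  qed
qed

lemma isCont_monomial_sum:
  assumes "\<And>a. a \<in> A \<Longrightarrow> isCont (c a) x"
  shows "isCont (monomial_sum A c) x"
  unfolding monomial_sum_def using assms by (intro continuous_intros) auto

lemma holo_germ_eventually_isCont: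
  assumes "holo_germ g"
  shows "\<forall>\<^sub>F x in nhds 0. isCont g x"
  using assms unfolding holo_germ_def holo_on_def eventually_nhds
  by (metis has_derivative_continuous)

lemma qh_eventually_continuous_monomial_sum:
  assumes "qh w d g"
  obtains A c where "\<And>a. a \<in> A \<Longrightarrow> (\<Sum>i\<in>UNIV. real (a i) * w i) = d"
    "\<And>a. a \<in> A \<Longrightarrow> depends_on_wt0 w (c a)"
    "\<forall>\<^sub>F x in nhds 0. g x = monomial_sum A c x \<and> isCont (monomial_sum A c) x"
proof -
  obtain A c where "finite A" "\<And>a i. a \<in> A \<Longrightarrow> w i = 0 \<Longrightarrow> a i = 0"
    and weights: "\<And>a. a \<in> A \<Longrightarrow> (\<Sum>i\<in>UNIV. real (a i) * w i) = d"
    and coeffs: "\<And>a. a \<in> A \<Longrightarrow> holo_germ (c a) \<and> depends_on_wt0 w (c a)"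
    and g: "\<forall>\<^sub>F x in nhds 0. g x = monomial_sum A c x"
    using assms by (rule qhE) blast
  have "\<forall>\<^sub>F x in nhds 0. \<forall>a\<in>A. isCont (c a) x"
    using coeffs by (intro eventually_ball_finite[OF \<open>finite A\<close>] ballI holo_germ_eventually_isCont) blast
  with g have "\<forall>\<^sub>F x in nhds 0. g x = monomial_sum A c x \<and> isCont (monomial_sum A c) x"
    by eventually_elim (auto intro: isCont_monomial_sum)
  with weights coeffs show thesis
    using that by blast
qed

lemma log_form_ext_d_Cons:
  assumes "log_form f (length js) \<omega>"
  obtains \<theta> where "\<forall>\<^sub>F x in nhds 0. f x \<noteq> 0 \<longrightarrow> (\<forall>j. f x * ext_d \<omega> (j # js) x = \<theta> j x)"
    "\<forall>\<^sub>F x in nhds 0. \<forall>j. isCont (\<theta> j) x"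
proof -
  obtain \<Theta> where "holo_form (Suc (length js)) \<Theta>" "f_times_eq f (Suc (length js)) (ext_d \<omega>) \<Theta>"
    using assms unfolding log_form_def by blast
  then show thesis
    unfolding holo_form_def f_times_eq_def
    by (intro that[of "\<lambda>j. \<Theta> (j # js)"])
      (auto elim: eventually_mono intro!: eventually_all_finite holo_germ_eventually_isCont)
qed

lemma qh_negative_weight_vanishes:
  assumes "\<forall>i. 0 \<le> w i" "qh w d g" "d < 0"
  shows "\<forall>\<^sub>F x in nhds 0. g x = 0"
proof -
  obtain A c where "finite A" "\<And>a i. a \<in> A \<Longrightarrow> w i = 0 \<Longrightarrow> a i = 0"
    and A: "\<And>a. a \<in> A \<Longrightarrow> (\<Sum>i\<in>UNIV. real (a i) * w i) = d"
    and "\<And>a. a \<in> A \<Longrightarrow> holo_germ (c a) \<and> depends_on_wt0 w (c a)"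
    and g: "\<forall>\<^sub>F x in nhds 0. g x = monomial_sum A c x"
    using assms(2) by (rule qhE) blast
  have "A = {}"
  proof (rule ccontr)
    assume "A \<noteq> {}"
    then obtain a where "a \<in> A"
      by blast
    have "0 \<le> (\<Sum>i\<in>UNIV. real (a i) * w i)"
      using assms(1) by (intro sum_nonneg) simp
    then show False
      using A[OF \<open>a \<in> A\<close>] assms(3) by simp
  qed
  then show ?thesis
    using g by (simp add: monomial_sum_def)
qed

lemma qh_zero_weight_depends_on_wt0:
  assumes "\<forall>i. 0 \<le> w i" "qh w 0 g"
  obtains C where "depends_on_wt0 w C" "\<forall>\<^sub>F x in nhds 0. g x = C x"
proof -
  obtain A c where "finite A" and A: "\<And>a i. a \<in> A \<Longrightarrow> w i = 0 \<Longrightarrow> a i = 0"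
    "\<And>a. a \<in> A \<Longrightarrow> (\<Sum>i\<in>UNIV. real (a i) * w i) = 0"
    "\<And>a. a \<in> A \<Longrightarrow> holo_germ (c a) \<and> depends_on_wt0 w (c a)"
    and g: "\<forall>\<^sub>F x in nhds 0. g x = monomial_sum A c x"
    using assms(2) by (rule qhE) blast
  have exponent_zero: "a i = 0" if "a \<in> A" for a i
  proof (cases "w i = 0")
    case False
    have "\<forall>i\<in>UNIV. real (a i) * w i = 0"
      using A(2)[OF that] assms(1) by (subst sum_nonneg_eq_0_iff[symmetric]) auto
    then have "real (a i) * w i = 0"
      by blast
    then show ?thesis
      using False by simp
  qed (use A(1) that in blast)
  show thesis
  proof
    show "depends_on_wt0 w (\<lambda>x. \<Sum>a\<in>A. c a x)"
      using A(3) unfolding depends_on_wt0_def by (metis (no_types, lifting) sum.cong)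
    show "\<forall>\<^sub>F x in nhds 0. g x = (\<Sum>a\<in>A. c a x)"
      using g by (rule eventually_mono) (simp add: monomial_sum_def exponent_zero)
  qed
qed

lemma qh_form_component_vanishes:
  assumes "\<forall>i. 0 \<le> w i" "qh_form w p d \<eta>" "length L = p" "d < sum_list (map w L)"
  shows "\<forall>\<^sub>F x in nhds 0. \<eta> L x = 0"
  using assms qh_negative_weight_vanishes[of w "d - sum_list (map w L)" "\<eta> L"]
  unfolding qh_form_def by simp

lemma f_times_eq_eventually_zero:
  assumes "f_times_eq f p \<omega> \<eta>" "length L = p" "\<forall>\<^sub>F x in nhds 0. \<eta> L x = 0"
  shows "\<forall>\<^sub>F x in nhds 0. f x \<noteq> 0 \<longrightarrow> \<omega> L x = 0"
  using assms(1,3) unfolding f_times_eq_def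
  by eventually_elim (use assms(2) in auto)

lemma exists_axis_line_leaving_zero_set:
  fixes F :: "complex^'n::finite \<Rightarrow> complex"
  assumes "F y \<noteq> 0" "\<And>x. \<forall>j\<in>W. x $ j = 0 \<Longrightarrow> F x = 0"
  obtains i u where "i \<in> W" "norm u \<le> norm y" "\<forall>j. j \<notin> W \<longrightarrow> u $ j = y $ j"
    "F u = 0" "F (u + y $ i *s axis i 1) \<noteq> 0"
proof -
  define zero_on where "zero_on S = (\<chi> j. if j \<in> S then 0 else y $ j)" for S
  have "F (zero_on {}) \<noteq> 0" "\<not> F (zero_on W) \<noteq> 0"
    using assms by (simp_all add: zero_on_def vec_eq_iff)
  then obtain S i where "S \<subseteq> W" "i \<in> W - S" "F (zero_on S) \<noteq> 0" "F (zero_on (insert i S)) = 0"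
    using finite_subset_chain_step[of W "\<lambda>S. F (zero_on S) \<noteq> 0"] by auto
  moreover have "norm (zero_on (insert i S)) \<le> norm y"
    by (rule norm_le_componentwise_cart) (simp add: zero_on_def)
  moreover have "zero_on (insert i S) + y $ i *s axis i 1 = zero_on S"
    using \<open>i \<in> W - S\<close> by (auto simp: vec_eq_iff zero_on_def axis_def)
  ultimately show thesis
    by (intro that[of i "zero_on (insert i S)"]) (auto simp: zero_on_def)
qed

lemma monomial_sum_axis_line_through_root:
  fixes w :: "'n::finite \<Rightarrow> real"
  assumes "\<forall>j. 0 \<le> w j"
    and "\<And>a. a \<in> A \<Longrightarrow> (\<Sum>j\<in>UNIV. real (a j) * w j) \<noteq> 0"
    and "\<And>a. a \<in> A \<Longrightarrow> depends_on_wt0 w (c a)"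
    and "monomial_sum A c y \<noteq> 0"
  obtains i u P where "0 < w i" "norm u \<le> norm y" "\<forall>j. w j = 0 \<longrightarrow> u $ j = y $ j"
    "\<forall>s. monomial_sum A c (u + s *s axis i 1) = poly P s" "P \<noteq> 0" "poly P 0 = 0"
proof -
  have "monomial_sum A c x = 0" if "\<forall>j\<in>{j. w j \<noteq> 0}. x $ j = 0" for x
  proof (rule monomial_sum_eq_0)
    fix a assume "a \<in> A"
    then obtain j where "real (a j) * w j \<noteq> 0"
      using sum.not_neutral_contains_not_neutral[OF assms(2)] by blast
    then show "\<exists>j. a j \<noteq> 0 \<and> x $ j = 0"
      using that by auto
  qed
  with assms(4) obtain i u where i: "i \<in> {j. w j \<noteq> 0}" and "norm u \<le> norm y"
    and "\<forall>j. j \<notin> {j. w j \<noteq> 0} \<longrightarrow> u $ j = y $ j"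
    and u: "monomial_sum A c u = 0" "monomial_sum A c (u + y $ i *s axis i 1) \<noteq> 0"
    by (rule exists_axis_line_leaving_zero_set)
  obtain P where P: "\<forall>s. monomial_sum A c (u + s *s axis i 1) = poly P s"
    using monomial_sum_on_axis_line depends_on_wt0_axis[OF assms(3)] i by blast
  show thesis
  proof (rule that)
    show "0 < w i"
      using i assms(1) by (simp add: order_less_le)
    show "P \<noteq> 0" "poly P 0 = 0"
      using P[rule_format, of "y $ i"] P[rule_format, of 0] u by auto
  qed (use P \<open>norm u \<le> norm y\<close> \<open>\<forall>j. j \<notin> {j. w j \<noteq> 0} \<longrightarrow> u $ j = y $ j\<close> in auto)
qed

lemma ext_d_on_axis_line:
  fixes \<omega> :: "'n::finite list \<Rightarrow> complex^'n \<Rightarrow> complex" and w :: "'n \<Rightarrow> real"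
  assumes "open U" and nonzero: "\<forall>x\<in>U. f x \<noteq> 0"
    and quotient: "\<forall>x\<in>U. f x * \<omega> js x = C x"
    and vanish: "\<forall>x\<in>U. \<forall>L. length L = length js \<longrightarrow> 0 < sum_list (map w L) \<longrightarrow> \<omega> L x = 0"
    and "\<forall>j. 0 \<le> w j" "0 < w i"
    and line: "\<forall>s. u + s *s axis i 1 \<in> U \<longrightarrow> f (u + s *s axis i 1) = poly P s \<and> C (u + s *s axis i 1) = c"
    and x: "u + t *s axis i 1 \<in> U"
  shows "f (u + t *s axis i 1) * ext_d \<omega> (i # js) (u + t *s axis i 1) = - c * poly (pderiv P) t / poly P t"
proof -
  let ?x = "u + t *s axis i 1"
  have fx: "f ?x = poly P t"
    using line x by blast
  then have "poly P t \<noteq> 0"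
    using nonzero x by auto
  have "\<forall>\<^sub>F s in nhds t. u + s *s axis i 1 \<in> U"
    using eventually_nhds_in_open[OF \<open>open U\<close> x] tendsto_axis_line[OF filterlim_ident]
    by (rule eventually_compose_filterlim)
  then have "\<forall>\<^sub>F s in nhds t. \<omega> js (u + s *s axis i 1) = c / poly P s"
  proof (rule eventually_mono)
    fix s
    assume "u + s *s axis i 1 \<in> U"
    then have "f (u + s *s axis i 1) = poly P s" "C (u + s *s axis i 1) = c"
      "f (u + s *s axis i 1) \<noteq> 0" "f (u + s *s axis i 1) * \<omega> js (u + s *s axis i 1) = C (u + s *s axis i 1)"
      using line nonzero quotient by auto
    then show "\<omega> js (u + s *s axis i 1) = c / poly P s"
      by (simp add: eq_divide_eq mult.commute)
  qed
  moreover have "((\<lambda>s. c / poly P s) has_field_derivative - c * poly (pderiv P) t / poly P t ^ 2) (at t)"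
    using \<open>poly P t \<noteq> 0\<close> by (auto intro!: derivative_eq_intros simp: power2_eq_square field_simps)
  ultimately have "pd i (\<omega> js) ?x = - c * poly (pderiv P) t / poly P t ^ 2"
    by (rule pd_along_line)
  moreover have "pd (js ! m) (\<omega> (i # (take m js @ drop (Suc m) js))) ?x = 0" if "m < length js" for m
  proof (rule pd_eventually_zero)
    have "0 < w i + sum_list (map w (take m js @ drop (Suc m) js))"
      using assms(5) by (intro add_pos_nonneg[OF assms(6)] sum_list_nonneg) auto
    then show "\<forall>\<^sub>F y in nhds ?x. \<omega> (i # (take m js @ drop (Suc m) js)) y = 0"
      using eventually_nhds_in_open[OF \<open>open U\<close> x] vanish that
      by (elim eventually_mono) auto
  qed
  ultimately have "ext_d \<omega> (i # js) ?x = - c * poly (pderiv P) t / poly P t ^ 2"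
    by (simp add: ext_d_Cons)
  then show ?thesis
    using fx \<open>poly P t \<noteq> 0\<close> by (simp add: power2_eq_square)
qed

lemma wt0_quotient_not_log_form_on_ball:
  fixes \<omega> :: "'n::finite list \<Rightarrow> complex^'n \<Rightarrow> complex" and w :: "'n \<Rightarrow> real"
  assumes "\<forall>j. 0 \<le> w j"
    and monomials: "\<And>a. a \<in> A \<Longrightarrow> (\<Sum>j\<in>UNIV. real (a j) * w j) \<noteq> 0"
      "\<And>a. a \<in> A \<Longrightarrow> depends_on_wt0 w (c a)"
    and f: "\<forall>x\<in>ball 0 R. f x = monomial_sum A c x" "continuous_on (ball 0 R) f"
    and quotient: "\<forall>x\<in>ball 0 R. f x \<noteq> 0 \<longrightarrow> f x * \<omega> js x = C x" "depends_on_wt0 w C"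
    and vanish: "\<forall>x\<in>ball 0 R. f x \<noteq> 0 \<longrightarrow>
      (\<forall>L. length L = length js \<longrightarrow> 0 < sum_list (map w L) \<longrightarrow> \<omega> L x = 0)"
    and dlog: "\<forall>x\<in>ball 0 R. f x \<noteq> 0 \<longrightarrow> (\<forall>j. f x * ext_d \<omega> (j # js) x = \<theta> j x)"
      "\<forall>j. continuous_on (ball 0 R) (\<theta> j)"
    and y: "y \<in> ball 0 R" "f y \<noteq> 0" "C y \<noteq> 0"
  shows False
proof -
  define U where "U = ball 0 R \<inter> f -` (- {0})"
  have "open U"
    unfolding U_def using f(2) by (intro continuous_open_preimage) auto
  have "monomial_sum A c y \<noteq> 0"
    using f(1) y by simp
  with assms(1) monomials obtain i u P where "0 < w i" "norm u \<le> norm y" "\<forall>j. w j = 0 \<longrightarrow> u $ j = y $ j"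
    and P: "\<forall>s. monomial_sum A c (u + s *s axis i 1) = poly P s" and "P \<noteq> 0" "poly P 0 = 0"
    by (rule monomial_sum_axis_line_through_root)
  have "u \<in> ball 0 R"
    using \<open>norm u \<le> norm y\<close> y(1) by simp
  have C_line: "C (u + s *s axis i 1) = C y" for s
    using depends_on_wt0_axis[OF quotient(2)] \<open>0 < w i\<close> quotient(2) \<open>\<forall>j. w j = 0 \<longrightarrow> u $ j = y $ j\<close>
    unfolding depends_on_wt0_def by (metis less_irrefl)
  have log_deriv: "\<theta> i (u + t *s axis i 1) * poly P t = - C y * poly (pderiv P) t"
    if "u + t *s axis i 1 \<in> U" for t
  proof -
    have "f (u + t *s axis i 1) * ext_d \<omega> (i # js) (u + t *s axis i 1) = - C y * poly (pderiv P) t / poly P t"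
      using \<open>open U\<close> quotient(1) vanish assms(1) \<open>0 < w i\<close> that f(1) P C_line
      by (intro ext_d_on_axis_line[where U = U]) (auto simp: U_def)
    moreover have "\<theta> i (u + t *s axis i 1) = f (u + t *s axis i 1) * ext_d \<omega> (i # js) (u + t *s axis i 1)"
      using dlog(1) that by (auto simp: U_def)
    moreover have "f (u + t *s axis i 1) = poly P t" "poly P t \<noteq> 0"
      using that f(1) P by (auto simp: U_def)
    ultimately show ?thesis
      by (simp add: field_simps)
  qed
  have "\<forall>\<^sub>F t in at 0. u + t *s axis i 1 \<in> ball 0 R"
    using eventually_axis_line_in_open[OF open_ball \<open>u \<in> ball 0 R\<close>] by (simp add: eventually_nhds_conv_at)
  then have "\<forall>\<^sub>F t in at 0. poly P t \<noteq> 0 \<longrightarrow> \<theta> i (u + t *s axis i 1) * poly P t = - C y * poly (pderiv P) t"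
  proof (rule eventually_mono, intro impI)
    fix t
    assume "u + t *s axis i 1 \<in> ball 0 R" "poly P t \<noteq> 0"
    then have "u + t *s axis i 1 \<in> U"
      using f(1) P by (simp add: U_def)
    then show "\<theta> i (u + t *s axis i 1) * poly P t = - C y * poly (pderiv P) t"
      by (rule log_deriv)
  qed
  moreover have "isCont (\<lambda>t. \<theta> i (u + t *s axis i 1)) 0"
    using dlog(2) \<open>u \<in> ball 0 R\<close> by (intro isCont_on_axis_line) auto
  ultimately show False
    using no_continuous_log_deriv_at_root[OF \<open>P \<noteq> 0\<close> \<open>poly P 0 = 0\<close>, of "- C y"] y(3) by auto
qed

lemma wt0_component_not_log_form:
  fixes \<omega> :: "'n::finite list \<Rightarrow> complex^'n \<Rightarrow> complex" and w :: "'n \<Rightarrow> real"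
  assumes "\<forall>j. 0 \<le> w j" and f: "qh w df f" "0 < df"
    and quotient: "\<forall>\<^sub>F x in nhds 0. f x \<noteq> 0 \<longrightarrow> f x * \<omega> js x = C x" "depends_on_wt0 w C"
    and vanish: "\<And>L. length L = length js \<Longrightarrow> 0 < sum_list (map w L) \<Longrightarrow>
      \<forall>\<^sub>F x in nhds 0. f x \<noteq> 0 \<longrightarrow> \<omega> L x = 0"
    and nonzero: "\<not> (\<forall>\<^sub>F x in nhds 0. f x \<noteq> 0 \<longrightarrow> \<omega> js x = 0)"
  shows "\<not> log_form f (length js) \<omega>"
proof
  assume "log_form f (length js) \<omega>"
  then obtain \<theta> where dlog: "\<forall>\<^sub>F x in nhds 0. f x \<noteq> 0 \<longrightarrow> (\<forall>j. f x * ext_d \<omega> (j # js) x = \<theta> j x)"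
    and \<theta>_cont: "\<forall>\<^sub>F x in nhds 0. \<forall>j. isCont (\<theta> j) x"
    by (rule log_form_ext_d_Cons)
  obtain A c where weights: "\<And>a. a \<in> A \<Longrightarrow> (\<Sum>i\<in>UNIV. real (a i) * w i) = df"
    and coeffs: "\<And>a. a \<in> A \<Longrightarrow> depends_on_wt0 w (c a)"
    and f_eq: "\<forall>\<^sub>F x in nhds 0. f x = monomial_sum A c x \<and> isCont (monomial_sum A c) x"
    using f(1) by (rule qh_eventually_continuous_monomial_sum) blast
  have "finite {L. length L = length js \<and> 0 < sum_list (map w L)}"
    by (rule finite_subset[OF _ finite_lists_length_eq[of UNIV "length js"]]) auto
  then have vanish_near: "\<forall>\<^sub>F x in nhds 0.
      \<forall>L\<in>{L. length L = length js \<and> 0 < sum_list (map w L)}. f x \<noteq> 0 \<longrightarrow> \<omega> L x = 0"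
    using vanish by (intro eventually_ball_finite) auto
  have "\<forall>\<^sub>F x in nhds 0. (f x = monomial_sum A c x \<and> isCont (monomial_sum A c) x) \<and>
      (f x \<noteq> 0 \<longrightarrow> f x * \<omega> js x = C x) \<and>
      (f x \<noteq> 0 \<longrightarrow> (\<forall>L. length L = length js \<longrightarrow> 0 < sum_list (map w L) \<longrightarrow> \<omega> L x = 0)) \<and>
      (f x \<noteq> 0 \<longrightarrow> (\<forall>j. f x * ext_d \<omega> (j # js) x = \<theta> j x)) \<and> (\<forall>j. isCont (\<theta> j) x)"
    (is "\<forall>\<^sub>F x in nhds 0. ?near x")
    using f_eq quotient(1) vanish_near dlog \<theta>_cont by eventually_elim blast
  then obtain R where "0 < R" and R: "\<And>x. x \<in> ball 0 R \<Longrightarrow> ?near x"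
    unfolding eventually_nhds_metric by (auto simp: dist_commute)
  obtain y where y: "y \<in> ball 0 R" "f y \<noteq> 0" "\<omega> js y \<noteq> 0"
  proof -
    have "\<not> (\<forall>x. dist x 0 < R \<longrightarrow> f x \<noteq> 0 \<longrightarrow> \<omega> js x = 0)"
      using nonzero \<open>0 < R\<close> unfolding eventually_nhds_metric by blast
    then show thesis
      using that by (auto simp: dist_commute)
  qed
  show False
  proof (rule wt0_quotient_not_log_form_on_ball[of w A c R f \<omega> js C \<theta> y])
    show "continuous_on (ball 0 R) f"
      using R by (subst continuous_on_cong[OF refl, of _ f "monomial_sum A c"])
        (auto intro!: continuous_at_imp_continuous_on)
    show "\<forall>j. continuous_on (ball 0 R) (\<theta> j)"
      using R by (auto intro!: continuous_at_imp_continuous_on)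
    show "C y \<noteq> 0"
      using R[OF y(1)] y(2,3) by auto
    show "(\<Sum>j\<in>UNIV. real (a j) * w j) \<noteq> 0" if "a \<in> A" for a
      using weights[OF that] f(2) by simp
  qed (insert assms(1) coeffs quotient(2) R y, blast+)
qed

theorem mainTheorem2:
  fixes w :: "'n::finite \<Rightarrow> real" and f :: "complex^'n \<Rightarrow> complex" and df :: real
    and p :: nat and \<omega> :: "'n list \<Rightarrow> complex^'n \<Rightarrow> complex" and e :: real
  assumes "\<forall>i. w i \<ge> 0" and "\<exists>i. w i > 0"
    and "qh w df f" and "df > 0" and "\<not> (\<forall>\<^sub>F x in nhds 0. f x = 0)"
    and "p > 0" and "log_form f p \<omega>" and "nonzero_mero f p \<omega>" and "qh_mero w f df p e \<omega>"
  shows "e > - df"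
proof (rule ccontr)
  assume "\<not> e > - df"
  obtain \<eta> where \<eta>: "f_times_eq f p \<omega> \<eta>" "qh_form w p (e + df) \<eta>"
    using assms(9) unfolding qh_mero_def by blast
  obtain js where "length js = p" and js: "\<not> (\<forall>\<^sub>F x in nhds 0. f x \<noteq> 0 \<longrightarrow> \<omega> js x = 0)"
    using assms(8) unfolding nonzero_mero_def by blast
  have "\<not> e + df < sum_list (map w js)"
    using qh_form_component_vanishes[OF assms(1) \<eta>(2) \<open>length js = p\<close>]
      f_times_eq_eventually_zero[OF \<eta>(1) \<open>length js = p\<close>] js by blast
  moreover have "0 \<le> sum_list (map w js)"
    using assms(1) by (intro sum_list_nonneg) auto
  ultimately have "e + df = 0" "sum_list (map w js) = 0"
    using \<open>\<not> e > - df\<close> by linarith+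
  then have "qh w 0 (\<eta> js)"
    using \<eta>(2) \<open>length js = p\<close> unfolding qh_form_def by auto
  then obtain C where "depends_on_wt0 w C" and C: "\<forall>\<^sub>F x in nhds 0. \<eta> js x = C x"
    by (rule qh_zero_weight_depends_on_wt0[OF assms(1)])
  have quotient: "\<forall>\<^sub>F x in nhds 0. f x \<noteq> 0 \<longrightarrow> f x * \<omega> js x = C x"
    using \<eta>(1) C unfolding f_times_eq_def by eventually_elim (use \<open>length js = p\<close> in auto)
  have vanish: "\<forall>\<^sub>F x in nhds 0. f x \<noteq> 0 \<longrightarrow> \<omega> L x = 0"
    if "length L = length js" "0 < sum_list (map w L)" for L
    using qh_form_component_vanishes[OF assms(1) \<eta>(2)] f_times_eq_eventually_zero[OF \<eta>(1)]
      that \<open>length js = p\<close> \<open>e + df = 0\<close> by simp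
  have "\<not> log_form f (length js) \<omega>"
    by (rule wt0_component_not_log_form[where f = f and \<omega> = \<omega> and js = js and C = C,
          OF assms(1,3,4) quotient \<open>depends_on_wt0 w C\<close> vanish js])
  then show False
    using assms(7) \<open>length js = p\<close> by simp
qed

end
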